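(* Assume $a_T/T\to\infty$. Let $\hat c_{\mathrm R}(x,\mathbb P,T)=\max_{i\in\Sigma}\ell(x,i)$ and $\hat x^{\mathrm R}_T(\mathbb P)\in\arg\min_{x\in\mathcal X}\max_{i\in\Sigma}\ell(x,i)$. Then $(\hat c_{\mathrm R},\hat x^{\mathrm R})$ is a predictor–prescriptor pair satisfying the prescription out-of-sample guarantee with speed $(a_T)$, and for every predictor–prescriptor pair $(\hat c,\hat x)$ satisfying the prescription out-of-sample guarantee with speed $(a_T)$ we have $(\hat c_{\mathrm R},\hat x^{\mathrm R})\preceq_{\hat{\mathcal X}}(\hat c,\hat x)$.
   Context: Setting: $\Sigma=\{1,\dots,d\}$ ($d\ge2$) is finite; $\mathcal P\subset\mathbb R^d$ is the probability simplex over $\Sigma$ and $\mathcal P^o$ its relative interior (all entries positive). $\mathcal X\subset\mathbb R^n$ is compact and $\ell:\mathcal X\times\Sigma\to\mathbb R$ is continuous in $x$ for each $i$. For $x\in\mathcal X$, $\mu\in\mathbb R^d$ let $c(x,\mu)=\sum_{i\in\Sigma}\ell(x,i)\mu(i)$ and $c^\star(\mathbb P)=\min_{x\in\mathcal X}c(x,\mathbb P)$. Data $\xi_1,\xi_2,\dots$ are i.i.d. with law $\mathbb P\in\mathcal P$, $\mathbb P^\infty$ denotes their joint law, and $\hat{\mathbb P}_T(i)=\frac1T\sum_{t=1}^T\mathbf 1\{\xi_t=i\}$. $(a_T)_{T\ge1}$ is a sequence of positive reals with $a_T\to\infty$. A predictor is a sequence $\hat c=(\hat c(\cdot,\cdot,T))_{T\in\mathbb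 N}$ of functions $\mathcal X\times\mathcal P\to\mathbb R$. It is regular, written $\hat c\in\mathcal C$, if (i) the sequence $(\hat c(\cdot,\cdot,T))_T$ is uniformly bounded and equicontinuous on $\mathcal X\times\mathcal P$, and (ii) each $\hat c(x,\cdot,T)$ is differentiable in $\mathbb P$ and the sequence of derivative maps $(x,\mathbb P)\mapsto\nabla_{\mathbb P}\hat c(x,\mathbb P,T)$ is uniformly bounded and equicontinuous. (A sequence $(f_T)$ is equicontinuous if for every point $y$ and $\varepsilon>0$ there is a neighbourhood $U$ of $y$ with $|f_T(y)-f_T(z)|<\varepsilon$ for all $z\in U$ and all $T$.) A predictor–prescriptor pair $(\hat c,\hat x)$ consists of $\hat c\in\mathcal C$ and functions $\hat x_T:\mathcal P\to\mathcal X$ with $\hat x_T(\mathbb P)\in\arg\min_{x\in\mathcal X}\hat c(x,\mathbb P,T)$ for all $\mathbb P,T$; put $\hat c^\star(\mathbb P,T)=\hat c(\hat x_T(\mathbb P),\mathbb P,T)$. Prescription out-of-sample guarantee with speed $(a_T)$: for all $\mathbb P\in\mathcal P^o$, $\limsup_{T\to\infty}\frac1{a_T}\log\mathbb P^\infty\big(c(\hat x_T(\hat{\mathbb P}_T),\mathbb P)>\hat c^\star(\hat{\mathbb P}_T,T)\big)\le-1$. Order: $(\hat c_1,\hat x_1)\preceq_{\hat{\mathcal X}}(\hat c_2,\hat x_2)$ iff for all $\mathbb P\in\mathcal P^o$, $\limsup_{T\to\infty}\frac{|\hat c_1^\star(\mathbb P,T)-c^\star(\mathbb P)|}{|\hat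 c_2^\star(\mathbb P,T)-c^\star(\mathbb P)|}\le1$ (convention $0/0=1$). *)

theory Defs
  imports "HOL-Analysis.Analysis"
begin

text \<open>Alphabet Sigma is a finite type 'd; distributions are vectors in real^'d.\<close>

definition prob_simplex :: "(real^'d::finite) set" where
  "prob_simplex = {p. (\<forall>i. 0 \<le> p$i) \<and> (\<Sum>i\<in>UNIV. p$i) = 1}"

definition prob_simplex_int :: "(real^'d::finite) set" where
  "prob_simplex_int = {p. (\<forall>i. 0 < p$i) \<and> (\<Sum>i\<in>UNIV. p$i) = 1}"

definition cost :: "('a \<Rightarrow> 'd::finite \<Rightarrow> real) \<Rightarrow> 'a \<Rightarrow> real^'d \<Rightarrow> real" where
  "cost l x \<mu> = (\<Sum>i\<in>UNIV. l x i * \<mu>$i)"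

definition opt_cost :: "('a \<Rightarrow> 'd::finite \<Rightarrow> real) \<Rightarrow> 'a set \<Rightarrow> real^'d \<Rightarrow> real" where
  "opt_cost l X p = Inf ((\<lambda>x. cost l x p) ` X)"

definition emp :: "nat \<Rightarrow> (nat \<Rightarrow> 'd::finite) \<Rightarrow> real^'d" where
  "emp T w = (\<chi> i. real (card {t\<in>{..<T}. w t = i}) / real T)"

text \<open>Probability, under the i.i.d. law with marginal p, of an event depending
  only on the first T samples (the joint law of (xi_1,...,xi_T)).\<close>
definition iid_prob :: "real^'d::finite \<Rightarrow> nat \<Rightarrow> ((nat \<Rightarrow> 'd) \<Rightarrow> bool) \<Rightarrow> real" where
  "iid_prob p T E = (\<Sum>w\<in>PiE {..<T} (\<lambda>_. UNIV). if E w then (\<Prod>t<T. p$(w t)) else 0)"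

definition unif_bounded :: "'b set \<Rightarrow> (nat \<Rightarrow> 'b \<Rightarrow> 'c::real_normed_vector) \<Rightarrow> bool" where
  "unif_bounded S f \<longleftrightarrow> (\<exists>B. \<forall>T. \<forall>y\<in>S. norm (f T y) \<le> B)"

definition equicont_on :: "'b::metric_space set \<Rightarrow> (nat \<Rightarrow> 'b \<Rightarrow> 'c::metric_space) \<Rightarrow> bool" where
  "equicont_on S f \<longleftrightarrow>
     (\<forall>y\<in>S. \<forall>e>0. \<exists>\<delta>>0. \<forall>z\<in>S. dist z y < \<delta> \<longrightarrow> (\<forall>T. dist (f T y) (f T z) < e))"

text \<open>Regular predictors (the class C). A predictor is c x p T = hat c(x,P,T).\<close>
definition regular_predictor ::
  "'a::euclidean_space set \<Rightarrow> ('a \<Rightarrow> real^'d::finite \<Rightarrow> nat \<Rightarrow> real) \<Rightarrow> bool" where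
  "regular_predictor X c \<longleftrightarrow>
     unif_bounded (X \<times> prob_simplex) (\<lambda>T (x,p). c x p T) \<and>
     equicont_on (X \<times> prob_simplex) (\<lambda>T (x,p). c x p T) \<and>
     (\<exists>D :: nat \<Rightarrow> 'a \<Rightarrow> real^'d \<Rightarrow> real^'d.
        unif_bounded (X \<times> prob_simplex) (\<lambda>T (x,p). D T x p) \<and>
        equicont_on (X \<times> prob_simplex) (\<lambda>T (x,p). D T x p) \<and>
        (\<forall>T. \<forall>x\<in>X. \<forall>p\<in>prob_simplex.
           ((\<lambda>q. c x q T) has_derivative (\<lambda>h. D T x p \<bullet> h)) (at p within prob_simplex)))"

definition pp_pair ::
  "'a::euclidean_space set \<Rightarrow> ('a \<Rightarrow> real^'d::finite \<Rightarrow> nat \<Rightarrow> real) \<Rightarrow> (nat \<Rightarrow> real^'d \<Rightarrow> 'a) \<Rightarrow> bool" where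
  "pp_pair X c xh \<longleftrightarrow> regular_predictor X c \<and>
     (\<forall>T. \<forall>p\<in>prob_simplex. xh T p \<in> X \<and> (\<forall>x\<in>X. c (xh T p) p T \<le> c x p T))"

definition opt_pred :: "('a \<Rightarrow> 'p \<Rightarrow> nat \<Rightarrow> real) \<Rightarrow> (nat \<Rightarrow> 'p \<Rightarrow> 'a) \<Rightarrow> 'p \<Rightarrow> nat \<Rightarrow> real" where
  "opt_pred c xh p T = c (xh T p) p T"

definition log_rate :: "real \<Rightarrow> real \<Rightarrow> ereal" where
  "log_rate a q = (if q = 0 then -\<infinity> else ereal (ln q / a))"

definition oos_guarantee ::
  "('a \<Rightarrow> 'd::finite \<Rightarrow> real) \<Rightarrow> (nat \<Rightarrow> real) \<Rightarrow> ('a \<Rightarrow> real^'d \<Rightarrow> nat \<Rightarrow> real) \<Rightarrow> (nat \<Rightarrow> real^'d \<Rightarrow> 'a) \<Rightarrow> bool" where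
  "oos_guarantee l a c xh \<longleftrightarrow>
     (\<forall>p\<in>prob_simplex_int.
        limsup (\<lambda>T. log_rate (a T)
          (iid_prob p T (\<lambda>w. cost l (xh T (emp T w)) p > opt_pred c xh (emp T w) T))) \<le> -1)"

definition rel_ratio :: "real \<Rightarrow> real \<Rightarrow> ereal" where
  "rel_ratio u v = (if v = 0 then (if u = 0 then 1 else \<infinity>) else ereal (u / v))"

definition pp_preceq ::
  "('a \<Rightarrow> 'd::finite \<Rightarrow> real) \<Rightarrow> 'a set \<Rightarrow> ('a \<Rightarrow> real^'d \<Rightarrow> nat \<Rightarrow> real) \<Rightarrow> (nat \<Rightarrow> real^'d \<Rightarrow> 'a)
     \<Rightarrow> ('a \<Rightarrow> real^'d \<Rightarrow> nat \<Rightarrow> real) \<Rightarrow> (nat \<Rightarrow> real^'d \<Rightarrow> 'a) \<Rightarrow> bool" where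
  "pp_preceq l X c1 x1 c2 x2 \<longleftrightarrow>
     (\<forall>p\<in>prob_simplex_int.
        limsup (\<lambda>T. rel_ratio \<bar>opt_pred c1 x1 p T - opt_cost l X p\<bar>
                             \<bar>opt_pred c2 x2 p T - opt_cost l X p\<bar>) \<le> 1)"

definition robust_pred :: "('a \<Rightarrow> 'd::finite \<Rightarrow> real) \<Rightarrow> 'a \<Rightarrow> real^'d \<Rightarrow> nat \<Rightarrow> real" where
  "robust_pred l x p T = Max (range (l x))"

end

theory Submission imports Defs begin

(*
  The robust predictor is never disappointed: the worst-case loss max_i l(x,i) dominates the
  expected loss under every distribution, so the disappointment event is empty. Its optimal
  value is the constant minimax loss R = min_x max_i l(x,i).

  Conversely, let (c, xh) satisfy the guarantee at a speed a_T with a_T / T -> oo. Under P in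
  the interior of the simplex every single sample path of length T has probability at least
  (min_i P(i))^T = exp(-O(T)) = exp(-o(a_T)), so for large T the disappointment event must be
  empty: c(xh_T(r), P) <= c*(r, T) for every empirical distribution r. Taking P close to the
  vertex at i gives l(xh_T(r), i) <= c*(r, T) + eps for all i, hence R <= c*(r, T) + eps.
  Empirical distributions approximate any P up to O(1/T), and c* is uniformly Lipschitz in the
  distribution because the derivatives of c are uniformly bounded; so R - 2 eps <= c*(P, T)
  eventually, i.e. c*(P, T) stays at least as far from c^*(P) as the robust value R does.
*)

lemma prob_simplex_int_subset: "prob_simplex_int \<subseteq> prob_simplex"
  unfolding prob_simplex_int_def prob_simplex_def by (auto intro: less_imp_le)

lemma convex_prob_simplex: "convex (prob_simplex :: (real^'d::finite) set)"
  unfolding convex_def prob_simplex_def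
  by (auto simp: sum.distrib simp flip: sum_distrib_left)

lemma cost_le_Max_range:
  assumes "p \<in> prob_simplex"
  shows "cost l x p \<le> Max (range (l x :: 'd::finite \<Rightarrow> real))"
proof -
  have "cost l x p \<le> (\<Sum>i\<in>UNIV. Max (range (l x)) * p$i)"
    unfolding cost_def using assms unfolding prob_simplex_def
    by (intro sum_mono mult_right_mono) auto
  also have "\<dots> = Max (range (l x))"
    using assms unfolding prob_simplex_def by (simp flip: sum_distrib_left)
  finally show ?thesis .
qed

lemma abs_cost_le:
  fixes l :: "'a \<Rightarrow> 'd::finite \<Rightarrow> real"
  assumes p: "p \<in> prob_simplex" and M: "\<And>i. \<bar>l x i\<bar> \<le> M"
  shows "\<bar>cost l x p\<bar> \<le> M"
proof -
  have p0: "\<And>i. 0 \<le> p$i" and p1: "(\<Sum>i\<in>UNIV. p$i) = 1"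
    using p by (auto simp: prob_simplex_def)
  have "\<bar>cost l x p\<bar> \<le> (\<Sum>i\<in>UNIV. \<bar>l x i * p$i\<bar>)"
    unfolding cost_def by (rule sum_abs)
  also have "\<dots> \<le> (\<Sum>i\<in>UNIV. M * p$i)"
    using p0 M by (intro sum_mono) (simp add: abs_mult mult_right_mono)
  also have "\<dots> = M" by (simp add: p1 flip: sum_distrib_left)
  finally show ?thesis .
qed

lemma bounded_loss_on_compact:
  fixes l :: "'a::topological_space \<Rightarrow> 'd::finite \<Rightarrow> real"
  assumes "compact X" "\<forall>i. continuous_on X (\<lambda>x. l x i)"
  obtains M where "0 \<le> M" "\<forall>x\<in>X. \<forall>i. \<bar>l x i\<bar> \<le> M"
proof -
  have "bounded (\<Union>i. (\<lambda>x. l x i) ` X)"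
    using assms by (intro bounded_UN ballI compact_imp_bounded compact_continuous_image) auto
  then obtain M where "0 < M" "\<forall>y\<in>(\<Union>i. (\<lambda>x. l x i) ` X). norm y \<le> M"
    unfolding bounded_pos by blast
  then show ?thesis by (intro that[of M]) auto
qed

lemma continuous_on_Max_image:
  fixes l :: "'a::topological_space \<Rightarrow> 'd \<Rightarrow> real"
  assumes "finite A" "A \<noteq> {}" "\<And>i. i \<in> A \<Longrightarrow> continuous_on X (\<lambda>x. l x i)"
  shows "continuous_on X (\<lambda>x. Max (l x ` A))"
  using assms by (induction A rule: finite_ne_induct) (simp_all add: continuous_on_max)

lemma unif_bounded_const: "bounded (f ` S) \<Longrightarrow> unif_bounded S (\<lambda>T. f)"
  unfolding unif_bounded_def bounded_iff by auto

lemma equicont_on_const: "continuous_on S f \<Longrightarrow> equicont_on S (\<lambda>T. f)"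
  unfolding equicont_on_def continuous_on_iff by (metis dist_commute)

definition minimax_loss :: "('a \<Rightarrow> 'd::finite \<Rightarrow> real) \<Rightarrow> 'a set \<Rightarrow> real" where
  "minimax_loss l X = (INF x\<in>X. Max (range (l x)))"

lemma regular_predictor_robust_pred:
  fixes X :: "'a::euclidean_space set" and l :: "'a \<Rightarrow> 'd::finite \<Rightarrow> real"
  assumes "compact X" "\<forall>i. continuous_on X (\<lambda>x. l x i)"
  shows "regular_predictor X (robust_pred l)"
proof -
  have cont_X: "continuous_on X (\<lambda>x. Max (range (l x)))"
    using continuous_on_Max_image[of UNIV X l] assms(2) by simp
  then have cont: "continuous_on (X \<times> prob_simplex) (\<lambda>(x, p::real^'d). Max (range (l x)))"
    unfolding case_prod_beta by (rule continuous_on_compose2[OF _ continuous_on_fst]) auto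
  have "bounded ((\<lambda>x. Max (range (l x))) ` X)"
    by (intro compact_imp_bounded compact_continuous_image cont_X assms(1))
  then have bdd: "bounded ((\<lambda>(x, p::real^'d). Max (range (l x))) ` (X \<times> prob_simplex))"
    by (rule bounded_subset) auto
  have D0_bounded: "unif_bounded (X \<times> prob_simplex) (\<lambda>T (x, p::real^'d). 0::real^'d)"
    unfolding unif_bounded_def by (intro exI[of _ 0]) (simp add: case_prod_beta)
  have D0_equicont: "equicont_on (X \<times> prob_simplex) (\<lambda>T (x, p::real^'d). 0::real^'d)"
    by (simp add: equicont_on_def)
  have D0_deriv: "((\<lambda>q. y) has_derivative (\<lambda>h. (0::real^'d) \<bullet> h)) F" for y :: real and F
    by (simp add: has_derivative_const)
  show ?thesis
    unfolding regular_predictor_def robust_pred_def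
    by (intro conjI exI[of _ "\<lambda>T x p. 0"] unif_bounded_const equicont_on_const bdd cont
          D0_bounded D0_equicont allI ballI D0_deriv)
qed

lemma pp_pair_robust_pred:
  fixes X :: "'a::euclidean_space set" and l :: "'a \<Rightarrow> 'd::finite \<Rightarrow> real"
  assumes "compact X" "\<forall>i. continuous_on X (\<lambda>x. l x i)"
    and "\<forall>T. \<forall>p\<in>prob_simplex. xR T p \<in> X \<and> (\<forall>x\<in>X. Max (range (l (xR T p))) \<le> Max (range (l x)))"
  shows "pp_pair X (robust_pred l) xR"
  unfolding pp_pair_def
proof (intro conjI allI ballI)
  show "regular_predictor X (robust_pred l)" by (rule regular_predictor_robust_pred[OF assms(1,2)])
  fix T and p :: "real^'d" assume p: "p \<in> prob_simplex"
  then show "xR T p \<in> X" using assms(3) by blast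
  fix x assume "x \<in> X"
  then show "robust_pred l (xR T p) p T \<le> robust_pred l x p T"
    unfolding robust_pred_def using assms(3) p by blast
qed

lemma oos_guarantee_robust_pred:
  fixes l :: "'a \<Rightarrow> 'd::finite \<Rightarrow> real"
  shows "oos_guarantee l a (robust_pred l) xR"
proof -
  have "iid_prob p T (\<lambda>w. cost l (xR T (emp T w)) p > opt_pred (robust_pred l) xR (emp T w) T) = 0"
    if "p \<in> prob_simplex_int" for p :: "real^'d" and T
  proof -
    have "\<not> opt_pred (robust_pred l) xR (emp T w) T < cost l (xR T (emp T w)) p" for w
      unfolding not_less opt_pred_def robust_pred_def
      using that prob_simplex_int_subset by (blast intro: cost_le_Max_range)
    then show ?thesis unfolding iid_prob_def by simp
  qed
  then show ?thesis
    unfolding oos_guarantee_def by (simp add: log_rate_def Limsup_const)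
qed

lemma opt_pred_robust_pred:
  assumes "\<forall>T. \<forall>p\<in>prob_simplex. xR T p \<in> X \<and> (\<forall>x\<in>X. Max (range (l (xR T p))) \<le> Max (range (l x)))"
    and "p \<in> prob_simplex"
  shows "opt_pred (robust_pred l) xR p T = minimax_loss l X"
proof -
  have xR: "xR T p \<in> X" "\<And>x. x \<in> X \<Longrightarrow> Max (range (l (xR T p))) \<le> Max (range (l x))"
    using assms(1)[rule_format, OF assms(2)] by simp_all
  show ?thesis
    unfolding opt_pred_def robust_pred_def minimax_loss_def
    by (rule cInf_eq_minimum[symmetric]) (use xR in auto)
qed

lemma opt_cost_le_minimax_loss:
  assumes "X \<noteq> {}" "\<forall>x\<in>X. \<forall>i. \<bar>l x i\<bar> \<le> M" "p \<in> prob_simplex"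
  shows "opt_cost l X p \<le> minimax_loss (l :: 'a \<Rightarrow> 'd::finite \<Rightarrow> real) X"
  unfolding minimax_loss_def
proof (rule cINF_greatest[OF assms(1)])
  fix x assume x: "x \<in> X"
  have "- M \<le> cost l y p" if "y \<in> X" for y
  proof -
    have "\<bar>cost l y p\<bar> \<le> M"
      by (rule abs_cost_le[OF assms(3)]) (use assms(2) that in blast)
    then show ?thesis by (simp add: abs_le_iff)
  qed
  then have "bdd_below ((\<lambda>x. cost l x p) ` X)" by (rule bdd_belowI2)
  then have "opt_cost l X p \<le> cost l x p"
    unfolding opt_cost_def using x by (rule cINF_lower)
  also have "\<dots> \<le> Max (range (l x))" by (rule cost_le_Max_range[OF assms(3)])
  finally show "opt_cost l X p \<le> Max (range (l x))" .
qed

lemma limsup_rel_ratio_le_one: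
  fixes u :: real and v :: "nat \<Rightarrow> real"
  assumes u: "0 \<le> u" and v: "\<And>\<epsilon>. \<epsilon> > 0 \<Longrightarrow> eventually (\<lambda>T. u - \<epsilon> \<le> v T) sequentially"
  shows "limsup (\<lambda>T. rel_ratio u \<bar>v T\<bar>) \<le> 1"
proof (cases "u = 0")
  case True
  then show ?thesis by (intro Limsup_bounded) (simp add: rel_ratio_def one_ereal_def)
next
  case False
  with u have upos: "u > 0" by simp
  show ?thesis
  proof (rule ereal_le_epsilon2)
    fix e :: real assume e: "e > 0"
    have "u - u * e / (1 + e) = u / (1 + e)" using e by (simp add: field_simps)
    then have "eventually (\<lambda>T. u / (1 + e) \<le> v T) sequentially"
      using v[of "u * e / (1 + e)"] upos e by simp
    then have "eventually (\<lambda>T. rel_ratio u \<bar>v T\<bar> \<le> 1 + ereal e) sequentially"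
    proof (rule eventually_mono)
      fix T assume vT: "u / (1 + e) \<le> v T"
      have "0 < u / (1 + e)" using upos e by simp
      then have vpos: "0 < v T" using vT by linarith
      have "u / v T \<le> u / (u / (1 + e))"
        using vT upos e vpos by (intro divide_left_mono) auto
      also have "\<dots> = 1 + e" using upos e by (simp add: field_simps)
      finally show "rel_ratio u \<bar>v T\<bar> \<le> 1 + ereal e"
        using vpos by (simp add: rel_ratio_def)
    qed
    then show "limsup (\<lambda>T. rel_ratio u \<bar>v T\<bar>) \<le> 1 + ereal e"
      by (rule Limsup_bounded)
  qed
qed

lemma regular_predictor_lipschitz:
  fixes X :: "'a::euclidean_space set" and c :: "'a \<Rightarrow> real^'d::finite \<Rightarrow> nat \<Rightarrow> real"
  assumes "regular_predictor X c"
  obtains B where "0 \<le> B"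
    "\<And>T x p q. x \<in> X \<Longrightarrow> p \<in> prob_simplex \<Longrightarrow> q \<in> prob_simplex \<Longrightarrow>
       \<bar>c x p T - c x q T\<bar> \<le> B * norm (p - q)"
proof -
  obtain D :: "nat \<Rightarrow> 'a \<Rightarrow> real^'d \<Rightarrow> real^'d" where
    D_bounded: "unif_bounded (X \<times> prob_simplex) (\<lambda>T (x,p). D T x p)" and
    D_deriv: "\<And>T x p. x \<in> X \<Longrightarrow> p \<in> prob_simplex \<Longrightarrow>
       ((\<lambda>q. c x q T) has_derivative (\<lambda>h. D T x p \<bullet> h)) (at p within prob_simplex)"
    using assms unfolding regular_predictor_def by blast
  obtain B where "\<forall>T. \<forall>y\<in>X \<times> prob_simplex. norm ((\<lambda>(x,p). D T x p) y) \<le> B"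
    using D_bounded unfolding unif_bounded_def by blast
  then have B: "\<And>T x p. x \<in> X \<Longrightarrow> p \<in> prob_simplex \<Longrightarrow> norm (D T x p) \<le> B"
    by fastforce
  have "\<bar>c x p T - c x q T\<bar> \<le> max B 0 * norm (p - q)"
    if x: "x \<in> X" and p: "p \<in> prob_simplex" and q: "q \<in> prob_simplex" for T x and p q :: "real^'d"
  proof -
    have "norm (c x p T - c x q T) \<le> max B 0 * norm (p - q)"
    proof (rule differentiable_bound[OF convex_prob_simplex D_deriv[OF x] _ p q])
      fix y :: "real^'d" assume y: "y \<in> prob_simplex"
      show "onorm (\<lambda>h. D T x y \<bullet> h) \<le> max B 0"
      proof (rule onorm_bound)
        fix h
        have "norm (D T x y \<bullet> h) \<le> norm (D T x y) * norm h" by (simp add: Cauchy_Schwarz_ineq2)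
        also have "\<dots> \<le> max B 0 * norm h" using B[of x y T, OF x y] by (intro mult_right_mono) auto
        finally show "norm (D T x y \<bullet> h) \<le> max B 0 * norm h" .
      qed simp
    qed
    then show ?thesis by simp
  qed
  then show ?thesis by (intro that[of "max B 0"]) auto
qed

lemma opt_pred_lipschitz:
  fixes X :: "'a::euclidean_space set" and c :: "'a \<Rightarrow> real^'d::finite \<Rightarrow> nat \<Rightarrow> real"
  assumes "pp_pair X c xh"
  obtains B where "0 \<le> B"
    "\<And>T p q. p \<in> prob_simplex \<Longrightarrow> q \<in> prob_simplex \<Longrightarrow>
       opt_pred c xh p T \<le> opt_pred c xh q T + B * norm (p - q)"
proof -
  have reg: "regular_predictor X c"
    and xh: "\<And>T q. q \<in> prob_simplex \<Longrightarrow> xh T q \<in> X \<and> (\<forall>x\<in>X. c (xh T q) q T \<le> c x q T)"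
    using assms unfolding pp_pair_def by auto
  obtain B where "0 \<le> B" and B: "\<And>T x p q. x \<in> X \<Longrightarrow> p \<in> prob_simplex \<Longrightarrow> q \<in> prob_simplex \<Longrightarrow>
       \<bar>c x p T - c x q T\<bar> \<le> B * norm (p - q)"
    using regular_predictor_lipschitz[OF reg] by blast
  have "opt_pred c xh p T \<le> opt_pred c xh q T + B * norm (p - q)"
    if p: "p \<in> prob_simplex" and q: "q \<in> prob_simplex" for T p q
  proof -
    have "opt_pred c xh p T \<le> c (xh T q) p T"
      unfolding opt_pred_def using xh[OF p] xh[OF q] by blast
    also have "\<dots> \<le> c (xh T q) q T + B * norm (p - q)"
      using B[OF _ p q, of "xh T q" T] xh[OF q] by (simp add: abs_le_iff)
    finally show ?thesis unfolding opt_pred_def .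
  qed
  with \<open>0 \<le> B\<close> show ?thesis by (rule that)
qed

lemma iid_prob_ge_path_prob:
  assumes q: "\<And>i. 0 \<le> q$i" and w: "w \<in> PiE {..<T} (\<lambda>_. UNIV)" and E: "E w"
  shows "(\<Prod>t<T. q$(w t)) \<le> iid_prob q T E"
proof -
  let ?f = "\<lambda>w. if E w then \<Prod>t<T. q$(w t) else 0"
  have "?f w \<le> sum ?f (PiE {..<T} (\<lambda>_. UNIV))"
    using w q by (intro member_le_sum) (auto intro: prod_nonneg finite_PiE)
  then show ?thesis using E unfolding iid_prob_def by simp
qed

lemma iid_prob_eventually_impossible:
  fixes q :: "real^'d::finite"
  assumes q: "q \<in> prob_simplex_int"
    and a_pos: "\<forall>T\<ge>1. a T > 0"
    and a_superlinear: "filterlim (\<lambda>T. a T / real T) at_top sequentially"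
    and rate: "limsup (\<lambda>T. log_rate (a T) (iid_prob q T (E T))) \<le> -1"
  shows "eventually (\<lambda>T. \<forall>w\<in>PiE {..<T} (\<lambda>_. UNIV). \<not> E T w) sequentially"
proof -
  have "limsup (\<lambda>T. log_rate (a T) (iid_prob q T (E T))) < ereal (-1/2)"
    using rate by (rule le_less_trans) (simp add: one_ereal_def)
  then have ev_rate: "eventually (\<lambda>T. log_rate (a T) (iid_prob q T (E T)) < ereal (-1/2)) sequentially"
    by (rule Limsup_lessD)
  define m where "m = Min (range (\<lambda>i. q$i))"
  have q_pos: "\<And>i. 0 < q$i" using q unfolding prob_simplex_int_def by simp
  have m_pos: "0 < m" unfolding m_def using q_pos by (subst Min_gr_iff) auto
  have m_le: "\<And>i. m \<le> q$i" unfolding m_def by (rule Min_le) auto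
  have ev_a: "eventually (\<lambda>T. -2 * ln m < a T / real T) sequentially"
    using a_superlinear by (simp add: filterlim_at_top_dense)
  show ?thesis
    using ev_rate ev_a eventually_ge_at_top[of 1]
  proof eventually_elim
    case (elim T)
    show ?case
    proof (intro ballI notI)
      fix w assume w: "w \<in> PiE {..<T} (\<lambda>_. UNIV)" and "E T w"
      have T_pos: "0 < real T" "0 < a T" using elim a_pos by auto
      have "m ^ T \<le> (\<Prod>t<T. q$(w t))"
        using prod_mono[of "{..<T}" "\<lambda>_. m" "\<lambda>t. q$(w t)"] m_pos m_le by simp
      also have "\<dots> \<le> iid_prob q T (E T)"
        using q_pos w \<open>E T w\<close> by (intro iid_prob_ge_path_prob less_imp_le)
      finally have mP: "m ^ T \<le> iid_prob q T (E T)" .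
      then have P_pos: "0 < iid_prob q T (E T)" using m_pos by (meson less_le_trans zero_less_power)
      have "real T * ln m = ln (m ^ T)" using m_pos by (simp add: ln_realpow)
      also have "\<dots> \<le> ln (iid_prob q T (E T))" using mP m_pos P_pos by simp
      finally have "real T * ln m / a T \<le> ln (iid_prob q T (E T)) / a T"
        using T_pos by (simp add: divide_right_mono)
      moreover have "-1/2 < real T * ln m / a T"
        using elim(2) T_pos by (simp add: field_simps)
      ultimately have "-1/2 < ln (iid_prob q T (E T)) / a T" by linarith
      with elim(1) P_pos show False unfolding log_rate_def by simp
    qed
  qed
qed

lemma exists_path_with_counts:
  fixes n :: "'d::finite \<Rightarrow> nat"
  assumes "sum n UNIV = T"
  shows "\<exists>w\<in>PiE {..<T} (\<lambda>_. UNIV). \<forall>i. card {t\<in>{..<T}. w t = i} = n i"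
  using assms
proof (induction T arbitrary: n)
  case 0
  then show ?case by (intro bexI[of _ "\<lambda>_. undefined"]) auto
next
  case (Suc T)
  have "\<exists>j. 0 < n j"
  proof (rule ccontr)
    assume "\<nexists>j. 0 < n j"
    then have "sum n UNIV = 0" by simp
    with Suc.prems show False by simp
  qed
  then obtain j where j: "0 < n j" by blast
  define n' where "n' = n(j := n j - 1)"
  have split: "sum g UNIV = g j + sum g (UNIV - {j})" for g :: "'d \<Rightarrow> nat"
    by (simp add: sum.remove)
  have "sum n' (UNIV - {j}) = sum n (UNIV - {j})"
    by (rule sum.cong) (auto simp: n'_def)
  then have "sum n' UNIV = T"
    using split[of n] split[of n'] Suc.prems j by (simp add: n'_def)
  then obtain w' where w': "w' \<in> PiE {..<T} (\<lambda>_. UNIV)"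
    and cnt: "\<And>i. card {t\<in>{..<T}. w' t = i} = n' i"
    using Suc.IH by blast
  define w where "w = w'(T := j)"
  have "w \<in> PiE {..<Suc T} (\<lambda>_. UNIV)"
    unfolding w_def lessThan_Suc using w' by (intro PiE_fun_upd) auto
  moreover have "card {t\<in>{..<Suc T}. w t = i} = n i" for i
  proof (cases "i = j")
    case True
    then have "{t\<in>{..<Suc T}. w t = i} = insert T {t\<in>{..<T}. w' t = i}"
      unfolding w_def by (auto simp: less_Suc_eq)
    moreover have "T \<notin> {t\<in>{..<T}. w' t = i}" by simp
    ultimately show ?thesis using cnt[of i] j True by (simp add: card_insert_disjoint n'_def)
  next
    case False
    then have "{t\<in>{..<Suc T}. w t = i} = {t\<in>{..<T}. w' t = i}"
      unfolding w_def by (auto simp: less_Suc_eq)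
    then show ?thesis using cnt[of i] False by (simp add: n'_def)
  qed
  ultimately show ?case by blast
qed

lemma exists_rounded_counts:
  fixes p :: "real^'d::finite"
  assumes p: "p \<in> prob_simplex"
  shows "\<exists>n::'d \<Rightarrow> nat. sum n UNIV = T \<and> (\<forall>i. \<bar>real (n i) - real T * p$i\<bar> \<le> 1)"
proof -
  have p0: "\<And>i. 0 \<le> p$i" and p1: "(\<Sum>i\<in>UNIV. p$i) = 1"
    using p by (auto simp: prob_simplex_def)
  define f where "f i = nat \<lfloor>real T * p$i\<rfloor>" for i
  have f_real: "real (f i) = of_int \<lfloor>real T * p$i\<rfloor>" for i
    unfolding f_def using p0[of i] by simp
  have f_bounds: "real (f i) \<le> real T * p$i" "real T * p$i < real (f i) + 1" for i
    unfolding f_real by linarith+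
  have sum_Tp: "(\<Sum>i\<in>UNIV. real T * p$i) = real T" by (simp add: p1 flip: sum_distrib_left)
  have "real (sum f UNIV) = (\<Sum>i\<in>UNIV. real (f i))" by simp
  also have "\<dots> \<le> (\<Sum>i\<in>UNIV. real T * p$i)" by (intro sum_mono f_bounds(1))
  finally have "real (sum f UNIV) \<le> real T" unfolding sum_Tp .
  then have f_le: "sum f UNIV \<le> T" by (simp only: of_nat_le_iff)
  have "real T = (\<Sum>i\<in>UNIV. real T * p$i)" by (rule sum_Tp[symmetric])
  also have "\<dots> < (\<Sum>i\<in>UNIV. real (f i) + 1)"
    by (rule sum_strict_mono) (auto intro: f_bounds(2))
  also have "\<dots> = real (sum f UNIV + CARD('d))" by (simp add: sum.distrib)
  finally have "T < sum f UNIV + CARD('d)" by (simp only: of_nat_less_iff)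
  then have "T - sum f UNIV \<le> card (UNIV :: 'd set)" by linarith
  then obtain S :: "'d set" where S: "card S = T - sum f UNIV"
    using obtain_subset_with_card_n by blast
  define n where "n i = f i + (if i \<in> S then 1 else 0)" for i
  have "sum n UNIV = sum f UNIV + card S"
    unfolding n_def by (simp add: sum.distrib sum.If_cases)
  also have "\<dots> = T" using S f_le by simp
  finally have "sum n UNIV = T" .
  moreover have "\<bar>real (n i) - real T * p$i\<bar> \<le> 1" for i
    using f_bounds[of i] unfolding n_def by (cases "i \<in> S") auto
  ultimately show ?thesis by blast
qed

lemma exists_empirical_near:
  fixes p :: "real^'d::finite"
  assumes p: "p \<in> prob_simplex" and T: "1 \<le> T"
  shows "\<exists>w\<in>PiE {..<T} (\<lambda>_. UNIV). emp T w \<in> prob_simplex \<and>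
           norm (emp T w - p) \<le> real CARD('d) / real T"
proof -
  obtain n :: "'d \<Rightarrow> nat" where n_sum: "sum n UNIV = T"
    and n_close: "\<And>i. \<bar>real (n i) - real T * p$i\<bar> \<le> 1"
    using exists_rounded_counts[OF p] by blast
  obtain w where w: "w \<in> PiE {..<T} (\<lambda>_. UNIV)"
    and cnt: "\<And>i. card {t\<in>{..<T}. w t = i} = n i"
    using exists_path_with_counts[OF n_sum] by blast
  have T_pos: "0 < real T" using T by simp
  have emp_eq: "emp T w $ i = real (n i) / real T" for i
    unfolding emp_def cnt by simp
  have "(\<Sum>i\<in>UNIV. emp T w $ i) = real (sum n UNIV) / real T"
    by (simp add: emp_eq sum_divide_distrib)
  then have "emp T w \<in> prob_simplex"
    unfolding prob_simplex_def using n_sum T_pos by (simp add: emp_eq)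
  moreover have "\<bar>emp T w $ i - p$i\<bar> \<le> 1 / real T" for i
  proof -
    have "emp T w $ i - p$i = (real (n i) - real T * p$i) / real T"
      unfolding emp_eq using T_pos by (simp add: field_simps)
    then show ?thesis using n_close[of i] T_pos by (simp add: abs_divide divide_right_mono)
  qed
  then have "norm (emp T w - p) \<le> real CARD('d) / real T"
    using norm_le_l1_cart[of "emp T w - p"] sum_mono[of UNIV "\<lambda>i. \<bar>(emp T w - p)$i\<bar>" "\<lambda>_. 1 / real T"]
    by simp
  ultimately show ?thesis using w by blast
qed

lemma exists_interior_near_vertex:
  fixes l :: "'a \<Rightarrow> 'd::finite \<Rightarrow> real"
  assumes M: "\<forall>x\<in>X. \<forall>i. \<bar>l x i\<bar> \<le> M" and "0 \<le> M" and \<epsilon>: "0 < \<epsilon>"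
  shows "\<exists>q\<in>prob_simplex_int. \<forall>x\<in>X. l x j - \<epsilon> \<le> cost l x q"
proof -
  define d where "d = real CARD('d)"
  define \<delta> where "\<delta> = min 1 (\<epsilon> / (2 * M + 1))"
  have d_pos: "0 < d" unfolding d_def by simp
  have \<delta>_pos: "0 < \<delta>" and \<delta>_le: "\<delta> \<le> 1" unfolding \<delta>_def using \<epsilon> \<open>0 \<le> M\<close> by auto
  have \<delta>M: "2 * M * \<delta> \<le> \<epsilon>"
  proof -
    have "\<delta> \<le> \<epsilon> / (2 * M + 1)" unfolding \<delta>_def by simp
    then have "\<delta> * (2 * M + 1) \<le> \<epsilon>" using \<open>0 \<le> M\<close> by (simp add: le_divide_eq)
    then show ?thesis using \<delta>_pos by (simp add: algebra_simps)
  qed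
  define q :: "real^'d" where "q = (\<chi> i. (if i = j then 1 - \<delta> else 0) + \<delta> / d)"
  have "q \<in> prob_simplex_int"
    unfolding prob_simplex_int_def q_def using \<delta>_pos \<delta>_le d_pos
    by (auto simp: sum.distrib d_def add_nonneg_pos)
  moreover have "l x j - \<epsilon> \<le> cost l x q" if x: "x \<in> X" for x
  proof -
    have "l x i * q$i = (if i = j then (1 - \<delta>) * l x i else 0) + \<delta> / d * l x i" for i
      unfolding q_def by (simp add: algebra_simps)
    then have "cost l x q = (1 - \<delta>) * l x j + \<delta> / d * (\<Sum>i\<in>UNIV. l x i)"
      unfolding cost_def by (simp add: sum.distrib sum_distrib_left)
    moreover have "- M \<le> l x i" for i using M x by (metis abs_le_iff minus_le_iff)
    then have "- d * M \<le> (\<Sum>i\<in>UNIV. l x i)"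
      using sum_mono[of UNIV "\<lambda>_. - M" "\<lambda>i. l x i"] unfolding d_def by simp
    then have "- \<delta> * M \<le> \<delta> / d * (\<Sum>i\<in>UNIV. l x i)"
      using \<delta>_pos d_pos mult_left_mono[of "- d * M" _ "\<delta> / d"] by simp
    moreover have "\<delta> * l x j \<le> \<delta> * M"
      using M x \<delta>_pos by (intro mult_left_mono) (auto simp: abs_le_iff)
    ultimately show ?thesis using \<delta>M by (simp add: algebra_simps)
  qed
  ultimately show ?thesis by blast
qed

lemma eventually_minimax_loss_le_opt_pred:
  fixes X :: "'a::euclidean_space set" and l :: "'a \<Rightarrow> 'd::finite \<Rightarrow> real"
    and c :: "'a \<Rightarrow> real^'d \<Rightarrow> nat \<Rightarrow> real" and xh :: "nat \<Rightarrow> real^'d \<Rightarrow> 'a"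
  assumes "compact X" "\<forall>i. continuous_on X (\<lambda>x. l x i)"
    and a_pos: "\<forall>T\<ge>1. a T > 0"
    and a_superlinear: "filterlim (\<lambda>T. a T / real T) at_top sequentially"
    and pp: "pp_pair X c xh" and G: "oos_guarantee l a c xh"
    and p: "p \<in> prob_simplex_int" and \<epsilon>: "0 < \<epsilon>"
  shows "eventually (\<lambda>T. minimax_loss l X - \<epsilon> \<le> opt_pred c xh p T) sequentially"
proof -
  obtain M where "0 \<le> M" and M: "\<forall>x\<in>X. \<forall>i. \<bar>l x i\<bar> \<le> M"
    using bounded_loss_on_compact[OF assms(1,2)] by blast
  obtain B where "0 \<le> B" and B: "\<And>T p q. p \<in> prob_simplex \<Longrightarrow> q \<in> prob_simplex \<Longrightarrow>
       opt_pred c xh p T \<le> opt_pred c xh q T + B * norm (p - q)"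
    using opt_pred_lipschitz[OF pp] by blast
  have xh: "\<And>T r. r \<in> prob_simplex \<Longrightarrow> xh T r \<in> X"
    using pp unfolding pp_pair_def by blast
  have pS: "p \<in> prob_simplex" using p prob_simplex_int_subset by blast
  have "\<forall>j. \<exists>q\<in>prob_simplex_int. \<forall>x\<in>X. l x j - \<epsilon>/2 \<le> cost l x q"
    using exists_interior_near_vertex[OF M \<open>0 \<le> M\<close>] \<epsilon> by simp
  then obtain q where q_int: "\<And>j. q j \<in> prob_simplex_int"
    and q_cost: "\<And>j x. x \<in> X \<Longrightarrow> l x j - \<epsilon>/2 \<le> cost l x (q j)"
    by metis
  have "eventually (\<lambda>T. \<forall>w\<in>PiE {..<T} (\<lambda>_. UNIV).
      \<not> cost l (xh T (emp T w)) (q j) > opt_pred c xh (emp T w) T) sequentially" for j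
    using G q_int[of j] unfolding oos_guarantee_def
    by (intro iid_prob_eventually_impossible[OF q_int a_pos a_superlinear]) blast
  then have no_disappointment: "eventually (\<lambda>T. \<forall>j. \<forall>w\<in>PiE {..<T} (\<lambda>_. UNIV).
      cost l (xh T (emp T w)) (q j) \<le> opt_pred c xh (emp T w) T) sequentially"
    by (simp add: not_less eventually_all_finite)
  show ?thesis
    using no_disappointment eventually_ge_at_top[of "max 1 (nat \<lceil>2 * B * CARD('d) / \<epsilon>\<rceil>)"]
  proof eventually_elim
    case (elim T)
    then have T: "1 \<le> T" by simp
    have "2 * B * CARD('d) / \<epsilon> \<le> real (nat \<lceil>2 * B * CARD('d) / \<epsilon>\<rceil>)"
      by (rule real_nat_ceiling_ge)
    also have "\<dots> \<le> real T" using elim(2) by simp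
    finally have B_small: "B * (CARD('d) / real T) \<le> \<epsilon> / 2"
      using \<epsilon> T by (simp add: field_simps)
    obtain w where w: "w \<in> PiE {..<T} (\<lambda>_. UNIV)" and r: "emp T w \<in> prob_simplex"
      and r_near: "norm (emp T w - p) \<le> CARD('d) / real T"
      using exists_empirical_near[OF pS T] by blast
    define x where "x = xh T (emp T w)"
    have x: "x \<in> X" unfolding x_def using r by (rule xh)
    have "l x j \<le> opt_pred c xh (emp T w) T + \<epsilon>/2" for j
    proof -
      have "cost l x (q j) \<le> opt_pred c xh (emp T w) T"
        unfolding x_def by (rule elim(1)[rule_format, OF w])
      then show ?thesis using q_cost[OF x, of j] by linarith
    qed
    then have "Max (range (l x)) \<le> opt_pred c xh (emp T w) T + \<epsilon>/2"
      by (intro Max.boundedI) auto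
    moreover have "minimax_loss l X \<le> Max (range (l x))"
    proof -
      have "- M \<le> Max (range (l y))" if "y \<in> X" for y
      proof -
        have "- M \<le> l y i" for i using M that by (metis abs_le_iff minus_le_iff)
        moreover have "l y i \<le> Max (range (l y))" for i by (rule Max_ge) auto
        ultimately show ?thesis using order_trans by blast
      qed
      then have "bdd_below ((\<lambda>y. Max (range (l y))) ` X)" by (rule bdd_belowI2)
      then show ?thesis unfolding minimax_loss_def using x by (rule cINF_lower)
    qed
    moreover have "opt_pred c xh (emp T w) T \<le> opt_pred c xh p T + \<epsilon>/2"
      using B[OF r pS, of T] r_near B_small \<open>0 \<le> B\<close> mult_left_mono[OF r_near \<open>0 \<le> B\<close>] by linarith
    ultimately show ?case by linarith
  qed
qed

theorem mainTheorem13: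
  fixes X :: "'a::euclidean_space set"
    and l :: "'a \<Rightarrow> 'd::finite \<Rightarrow> real"
    and a :: "nat \<Rightarrow> real"
    and xR :: "nat \<Rightarrow> real^'d \<Rightarrow> 'a"
  assumes "CARD('d) \<ge> 2"
    and "compact X" and "X \<noteq> {}"
    and "\<forall>i. continuous_on X (\<lambda>x. l x i)"
    and "\<forall>T\<ge>1. a T > 0"
    and "filterlim a at_top sequentially"
    and "filterlim (\<lambda>T. a T / real T) at_top sequentially"
    and "\<forall>T. \<forall>p\<in>prob_simplex. xR T p \<in> X \<and> (\<forall>x\<in>X. Max (range (l (xR T p))) \<le> Max (range (l x)))"
  shows "pp_pair X (robust_pred l) xR \<and> oos_guarantee l a (robust_pred l) xR \<and>
         (\<forall>(c :: 'a \<Rightarrow> real^'d \<Rightarrow> nat \<Rightarrow> real) (xh :: nat \<Rightarrow> real^'d \<Rightarrow> 'a).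
            pp_pair X c xh \<and> oos_guarantee l a c xh \<longrightarrow> pp_preceq l X (robust_pred l) xR c xh)"
proof -
  obtain M where M: "\<forall>x\<in>X. \<forall>i. \<bar>l x i\<bar> \<le> M"
    using bounded_loss_on_compact[OF assms(2,4)] by blast
  have "pp_preceq l X (robust_pred l) xR c xh"
    if "pp_pair X c xh" "oos_guarantee l a c xh" for c xh
    unfolding pp_preceq_def
  proof
    fix p :: "real^'d" assume p: "p \<in> prob_simplex_int"
    then have pS: "p \<in> prob_simplex" using prob_simplex_int_subset by blast
    have gap: "opt_cost l X p \<le> minimax_loss l X"
      by (rule opt_cost_le_minimax_loss[OF assms(3) M pS])
    show "limsup (\<lambda>T. rel_ratio \<bar>opt_pred (robust_pred l) xR p T - opt_cost l X p\<bar>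
                              \<bar>opt_pred c xh p T - opt_cost l X p\<bar>) \<le> 1"
      unfolding opt_pred_robust_pred[OF assms(8) pS] abs_of_nonneg[OF diff_ge_0_iff_ge[THEN iffD2, OF gap]]
    proof (rule limsup_rel_ratio_le_one)
      fix \<epsilon> :: real assume "0 < \<epsilon>"
      from eventually_minimax_loss_le_opt_pred[OF assms(2,4,5,7) that p this]
      show "eventually (\<lambda>T. minimax_loss l X - opt_cost l X p - \<epsilon> \<le> opt_pred c xh p T - opt_cost l X p)
          sequentially"
        by (rule eventually_mono) simp
    qed (use gap in simp)
  qed
  then show ?thesis
    using pp_pair_robust_pred[OF assms(2,4,8)] oos_guarantee_robust_pred by blast
qed

end
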